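(* Let $x,x'$ be two adjacent vertices of a graph $G$ and let $y,y'$ be two adjacent vertices of a graph $H$, where $G$ and $H$ are connected. If $X$ is a $\mu_t(G\,\Box\,H)$-set and $(x,y)\in X$, then $(x',y')\notin X$.
   Context: All graphs are finite, simple and undirected. The Cartesian product $G\,\Box\,H$ has vertex set $V(G)\times V(H)$, with $(x,y)$ adjacent to $(x',y')$ iff either $x=x'$ and $yy'\in E(H)$, or $xx'\in E(G)$ and $y=y'$. Let $F$ be a connected graph and $X\subseteq V(F)$. Two vertices $u,v\in V(F)$ are $X$-visible if there exists a shortest $u,v$-path in $F$ none of whose internal vertices belongs to $X$. $X$ is a total mutual-visibility set of $F$ if every two vertices of $F$ are $X$-visible (the empty set is allowed). $\mu_t(F)$ is the maximum cardinality of a total mutual-visibility set of $F$, and a $\mu_t(F)$-set is a total mutual-visibility set of that cardinality. *)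

theory Defs
  imports Main
begin

definition graph :: "'a set \<Rightarrow> ('a \<Rightarrow> 'a \<Rightarrow> bool) \<Rightarrow> bool" where
  "graph V E \<longleftrightarrow> finite V \<and> (\<forall>u v. E u v \<longrightarrow> u \<in> V \<and> v \<in> V)
     \<and> (\<forall>u v. E u v \<longrightarrow> E v u) \<and> (\<forall>u. \<not> E u u)"

definition walk :: "'a set \<Rightarrow> ('a \<Rightarrow> 'a \<Rightarrow> bool) \<Rightarrow> 'a list \<Rightarrow> bool" where
  "walk V E p \<longleftrightarrow> p \<noteq> [] \<and> set p \<subseteq> V \<and> (\<forall>i. Suc i < length p \<longrightarrow> E (p ! i) (p ! Suc i))"

definition walk_between :: "'a set \<Rightarrow> ('a \<Rightarrow> 'a \<Rightarrow> bool) \<Rightarrow> 'a \<Rightarrow> 'a \<Rightarrow> 'a list \<Rightarrow> bool" where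
  "walk_between V E u v p \<longleftrightarrow> walk V E p \<and> hd p = u \<and> last p = v"

definition connected_graph :: "'a set \<Rightarrow> ('a \<Rightarrow> 'a \<Rightarrow> bool) \<Rightarrow> bool" where
  "connected_graph V E \<longleftrightarrow> V \<noteq> {} \<and> (\<forall>u\<in>V. \<forall>v\<in>V. \<exists>p. walk_between V E u v p)"

text \<open>A shortest u,v-path: a u,v-walk of minimum length (such walks are automatically paths).\<close>
definition shortest_path :: "'a set \<Rightarrow> ('a \<Rightarrow> 'a \<Rightarrow> bool) \<Rightarrow> 'a \<Rightarrow> 'a \<Rightarrow> 'a list \<Rightarrow> bool" where
  "shortest_path V E u v p \<longleftrightarrow> walk_between V E u v p
     \<and> (\<forall>q. walk_between V E u v q \<longrightarrow> length p \<le> length q)"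

definition internal :: "'a list \<Rightarrow> 'a set" where
  "internal p = set (butlast (tl p))"

definition X_visible :: "'a set \<Rightarrow> ('a \<Rightarrow> 'a \<Rightarrow> bool) \<Rightarrow> 'a set \<Rightarrow> 'a \<Rightarrow> 'a \<Rightarrow> bool" where
  "X_visible V E X u v \<longleftrightarrow> (\<exists>p. shortest_path V E u v p \<and> internal p \<inter> X = {})"

definition total_mv_set :: "'a set \<Rightarrow> ('a \<Rightarrow> 'a \<Rightarrow> bool) \<Rightarrow> 'a set \<Rightarrow> bool" where
  "total_mv_set V E X \<longleftrightarrow> X \<subseteq> V \<and> (\<forall>u\<in>V. \<forall>v\<in>V. X_visible V E X u v)"

definition mu_t :: "'a set \<Rightarrow> ('a \<Rightarrow> 'a \<Rightarrow> bool) \<Rightarrow> nat" where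
  "mu_t V E = Max (card ` {X. total_mv_set V E X})"

definition mu_t_set :: "'a set \<Rightarrow> ('a \<Rightarrow> 'a \<Rightarrow> bool) \<Rightarrow> 'a set \<Rightarrow> bool" where
  "mu_t_set V E X \<longleftrightarrow> total_mv_set V E X \<and> card X = mu_t V E"

definition cart_vertices :: "'a set \<Rightarrow> 'b set \<Rightarrow> ('a \<times> 'b) set" where
  "cart_vertices VG VH = VG \<times> VH"

definition cart_edges :: "('a \<Rightarrow> 'a \<Rightarrow> bool) \<Rightarrow> ('b \<Rightarrow> 'b \<Rightarrow> bool) \<Rightarrow> ('a \<times> 'b) \<Rightarrow> ('a \<times> 'b) \<Rightarrow> bool" where
  "cart_edges EG EH = (\<lambda>(x, y) (x', y'). (x = x' \<and> EH y y') \<or> (EG x x' \<and> y = y'))"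

end

theory Submission
  imports Defs
begin

text \<open>In \<open>G \<box> H\<close> the vertices \<open>(x, y')\<close> and \<open>(x', y)\<close> are at distance 2 and their only
common neighbours are \<open>(x, y)\<close> and \<open>(x', y')\<close>. Every shortest path between them passes
through one of these, so a total mutual-visibility set cannot contain both.\<close>

lemma walk_between_two_edges:
  assumes "u \<in> V" "w \<in> V" "v \<in> V" "E u w" "E w v"
  shows "walk_between V E u v [u, w, v]"
  using assms unfolding walk_between_def walk_def by (auto simp: nth_Cons split: nat.splits)

lemma shortest_path_through_common_neighbour:
  assumes sp: "shortest_path V E u v p"
    and uwv: "walk_between V E u v [u, w, v]"
    and "u \<noteq> v" "\<not> E u v"
  obtains w' where "p = [u, w', v]" "E u w'" "E w' v"
proof -
  have len: "length p \<le> 3" and wp: "walk V E p" "hd p = u" "last p = v"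
    using sp uwv unfolding shortest_path_def walk_between_def by force+
  have "p \<noteq> []" using wp(1) unfolding walk_def by simp
  then obtain a r where p: "p = a # r" by (cases p) auto
  have "r \<noteq> []" using p wp \<open>u \<noteq> v\<close> by auto
  then obtain b s where r: "r = b # s" by (cases r) auto
  have ab: "E a b" using wp(1) p r unfolding walk_def by fastforce
  have "s \<noteq> []" using ab wp p r \<open>\<not> E u v\<close> by auto
  then obtain c where s: "s = [c]" using len p r by (cases s) auto
  have "E b c" using wp(1) p r s unfolding walk_def by fastforce
  with ab wp p r s show thesis using that by simp
qed

lemma total_mv_set_misses_common_neighbour:
  assumes "total_mv_set V E X" "u \<in> V" "v \<in> V" "u \<noteq> v" "\<not> E u v"
    and "walk_between V E u v [u, w, v]"
  obtains w' where "E u w'" "E w' v" "w' \<notin> X"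
proof -
  obtain p where sp: "shortest_path V E u v p" and p: "internal p \<inter> X = {}"
    using assms(1-3) unfolding total_mv_set_def X_visible_def by blast
  obtain w' where "p = [u, w', v]" "E u w'" "E w' v"
    using shortest_path_through_common_neighbour[OF sp assms(6,4,5)] .
  with p show thesis using that by (simp add: internal_def)
qed

lemma cart_edges_common_neighbour:
  assumes "x \<noteq> x'" "y \<noteq> y'"
    and "cart_edges EG EH (x, y') b" "cart_edges EG EH b (x', y)"
  shows "b = (x, y) \<or> b = (x', y')"
  using assms by (cases b) (auto simp: cart_edges_def)

theorem lemma5p8:
  fixes VG :: "'a set" and EG :: "'a \<Rightarrow> 'a \<Rightarrow> bool"
    and VH :: "'b set" and EH :: "'b \<Rightarrow> 'b \<Rightarrow> bool"
  assumes "graph VG EG" and "connected_graph VG EG"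
    and "graph VH EH" and "connected_graph VH EH"
    and "EG x x'" and "EH y y'"
    and "mu_t_set (cart_vertices VG VH) (cart_edges EG EH) X"
    and "(x, y) \<in> X"
  shows "(x', y') \<notin> X"
proof
  assume "(x', y') \<in> X"
  let ?V = "cart_vertices VG VH" and ?E = "cart_edges EG EH"
  have x: "x \<in> VG" "x' \<in> VG" "x \<noteq> x'" "EG x' x" using assms(1,5) unfolding graph_def by metis+
  have y: "y \<in> VH" "y' \<in> VH" "y \<noteq> y'" "EH y' y" using assms(3,6) unfolding graph_def by metis+
  have "walk_between ?V ?E (x, y') (x', y) [(x, y'), (x, y), (x', y)]"
    using x y assms(5) by (intro walk_between_two_edges) (auto simp: cart_vertices_def cart_edges_def)
  moreover have "total_mv_set ?V ?E X" using assms(7) unfolding mu_t_set_def by blast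
  moreover have "\<not> ?E (x, y') (x', y)" using x y by (simp add: cart_edges_def)
  ultimately obtain b where "?E (x, y') b" "?E b (x', y)" "b \<notin> X"
    using x y by (elim total_mv_set_misses_common_neighbour) (auto simp: cart_vertices_def)
  with x y have "b = (x, y) \<or> b = (x', y')" by (intro cart_edges_common_neighbour)
  with \<open>b \<notin> X\<close> \<open>(x, y) \<in> X\<close> \<open>(x', y') \<in> X\<close> show False by blast
qed

end
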